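(* Consider an unregularized MDP and run PMD with Bregman distance the squared Euclidean distance, i.e. $D^{\pi'}_{\pi}(s)=\tfrac12\|\pi'(\cdot\mid s)-\pi(\cdot\mid s)\|_2^2$. Let $N:=\lceil 4(1-\gamma)^{-1}\rceil$, $T:=\lceil\log_2(|\mathcal S|^3|\mathcal A|/(1-\gamma)^2)\rceil+1$, and use the step sizes $$\eta_t=\frac{2^{t+1}}{\Delta_{NT\lfloor t/(NT)\rfloor}},\qquad \Delta_{j}:=(1-\gamma)^{-1}\max_{s\in\mathcal S}g^{\pi_{j}}(s).$$ Then for any iteration $\tau\ge|\mathcal S|(|\mathcal A|-1)NT$, the greedy policy is optimal: $\hat\pi_\tau=\pi^*$.
   Context: An unregularized infinite-horizon discounted MDP ($h\equiv0$): finite $\mathcal S$, $\mathcal A$, transition probabilities $\mathcal P(s'\mid s,a)$, cost $c$, discount $\gamma\in[0,1)$. A policy assigns $\pi(\cdot\mid s)\in\Delta_{|\mathcal A|}$. $V^\pi(s)=\mathbb E[\sum_{t\ge0}\gamma^tc(s_t,a_t)\mid s_0=s,\ a_t\sim\pi(\cdot\mid s_t),\ s_{t+1}\sim\mathcal P(\cdot\mid s_t,a_t)]$, $Q^\pi(s,a)$ the same with $a_0=a$. Advantage $\psi^\pi(s,p):=\langle Q^\pi(s,\cdot),p\rangle-V^\pi(s)$; gap $g^\pi(s):=\max_{p\in\Delta_{|\mathcal A|}}\{-\psi^\pi(s,p)\}$. $\pi^*$ is the optimal policy ($V^{\pi^*}\le V^\pi$ pointwise for all $\pi$). PMD with this distance: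 $\pi_{t+1}(\cdot\mid s)=\operatorname{argmin}_{p\in\Delta_{|\mathcal A|}}\{\eta_t\langle Q^{\pi_t}(s,\cdot),p\rangle+\tfrac12\|p-\pi_t(\cdot\mid s)\|_2^2\}$ for all $s$, from an initial policy $\pi_0$. The greedy policy $\hat\pi_\tau$ of $\pi_\tau$ is given by $\hat\pi_\tau(\cdot\mid s)\in\operatorname{argmin}_{p\in\Delta_{|\mathcal A|}}\psi^{\pi_\tau}(s,p)$, chosen to be a vertex of the simplex, ties broken arbitrarily. *)

theory Defs
  imports "HOL-Analysis.Analysis"
begin

definition prob_simplex :: "('a::finite \<Rightarrow> real) \<Rightarrow> bool" where
  "prob_simplex p \<longleftrightarrow> (\<forall>a. 0 \<le> p a) \<and> (\<Sum>a\<in>UNIV. p a) = 1"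

definition is_policy :: "('s \<Rightarrow> 'a::finite \<Rightarrow> real) \<Rightarrow> bool" where
  "is_policy \<pi> \<longleftrightarrow> (\<forall>s. prob_simplex (\<pi> s))"

definition stochastic_kernel :: "('s::finite \<Rightarrow> 'a \<Rightarrow> 's \<Rightarrow> real) \<Rightarrow> bool" where
  "stochastic_kernel P \<longleftrightarrow> (\<forall>s a. (\<forall>s'. 0 \<le> P s a s') \<and> (\<Sum>s'\<in>UNIV. P s a s') = 1)"

definition Ppi :: "('s \<Rightarrow> 'a \<Rightarrow> 's \<Rightarrow> real) \<Rightarrow> ('s \<Rightarrow> 'a::finite \<Rightarrow> real) \<Rightarrow> 's \<Rightarrow> 's \<Rightarrow> real" where
  "Ppi P \<pi> s s' = (\<Sum>a\<in>UNIV. \<pi> s a * P s a s')"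

fun Pn :: "('s::finite \<Rightarrow> 'a \<Rightarrow> 's \<Rightarrow> real) \<Rightarrow> ('s \<Rightarrow> 'a::finite \<Rightarrow> real) \<Rightarrow> nat \<Rightarrow> 's \<Rightarrow> 's \<Rightarrow> real" where
  "Pn P \<pi> 0 s s' = (if s = s' then 1 else 0)"
| "Pn P \<pi> (Suc n) s s' = (\<Sum>s''\<in>UNIV. Pn P \<pi> n s s'' * Ppi P \<pi> s'' s')"

definition Vf :: "('s::finite \<Rightarrow> 'a \<Rightarrow> 's \<Rightarrow> real) \<Rightarrow> ('s \<Rightarrow> 'a::finite \<Rightarrow> real) \<Rightarrow> real
    \<Rightarrow> ('s \<Rightarrow> 'a \<Rightarrow> real) \<Rightarrow> 's \<Rightarrow> real" where
  "Vf P c \<gamma> \<pi> s = (\<Sum>t. \<gamma> ^ t * (\<Sum>s'\<in>UNIV. Pn P \<pi> t s s' * (\<Sum>a\<in>UNIV. \<pi> s' a * c s' a)))"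

definition Qf :: "('s::finite \<Rightarrow> 'a \<Rightarrow> 's \<Rightarrow> real) \<Rightarrow> ('s \<Rightarrow> 'a::finite \<Rightarrow> real) \<Rightarrow> real
    \<Rightarrow> ('s \<Rightarrow> 'a \<Rightarrow> real) \<Rightarrow> 's \<Rightarrow> 'a \<Rightarrow> real" where
  "Qf P c \<gamma> \<pi> s a = c s a + \<gamma> * (\<Sum>s'\<in>UNIV. P s a s' * Vf P c \<gamma> \<pi> s')"

definition adv where
  "adv P c \<gamma> \<pi> s p = (\<Sum>a\<in>UNIV. Qf P c \<gamma> \<pi> s a * p a) - Vf P c \<gamma> \<pi> s"

text \<open>Gap g^\<pi>(s) = max over the prob_simplex of -psi^\<pi>(s,p) (attained; written as Sup).\<close>
definition gap where
  "gap P c \<gamma> \<pi> s = Sup {- adv P c \<gamma> \<pi> s p | p. prob_simplex p}"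

definition optimal_policy where
  "optimal_policy P c \<gamma> \<pi> \<longleftrightarrow> is_policy \<pi> \<and>
     (\<forall>\<pi>'. is_policy \<pi>' \<longrightarrow> (\<forall>s. Vf P c \<gamma> \<pi> s \<le> Vf P c \<gamma> \<pi>' s))"

definition pmd_obj where
  "pmd_obj P c \<gamma> \<pi> \<eta> s p =
     \<eta> * (\<Sum>a\<in>UNIV. Qf P c \<gamma> \<pi> s a * p a) + 1/2 * (\<Sum>a\<in>UNIV. (p a - \<pi> s a)^2)"

definition Delta where
  "Delta P c \<gamma> pis j = (1 / (1 - \<gamma>)) * (MAX s\<in>UNIV. gap P c \<gamma> (pis j) s)"

definition N_param :: "real \<Rightarrow> nat" where
  "N_param \<gamma> = nat \<lceil>4 / (1 - \<gamma>)\<rceil>"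

definition T_param :: "real \<Rightarrow> nat \<Rightarrow> nat \<Rightarrow> nat" where
  "T_param \<gamma> nS nA = nat \<lceil>log 2 (real nS ^ 3 * real nA / (1 - \<gamma>)^2)\<rceil> + 1"

definition step_size where
  "step_size P c \<gamma> (pis :: nat \<Rightarrow> 's::finite \<Rightarrow> 'a::finite \<Rightarrow> real) t =
     (let NT = N_param \<gamma> * T_param \<gamma> CARD('s) CARD('a)
      in 2 ^ (t + 1) / Delta P c \<gamma> pis (NT * (t div NT)))"

definition is_pmd_sequence where
  "is_pmd_sequence P c \<gamma> pis \<longleftrightarrow> is_policy (pis 0) \<and>
     (\<forall>t s. prob_simplex (pis (Suc t) s) \<and>
        (\<forall>p. prob_simplex p \<longrightarrow>
           pmd_obj P c \<gamma> (pis t) (step_size P c \<gamma> pis t) s (pis (Suc t) s)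
             \<le> pmd_obj P c \<gamma> (pis t) (step_size P c \<gamma> pis t) s p))"

definition is_greedy where
  "is_greedy P c \<gamma> \<pi> pihat \<longleftrightarrow>
     (\<forall>s. (\<exists>a. \<forall>a'. pihat s a' = (if a' = a then 1 else 0)) \<and>
          (\<forall>p. prob_simplex p \<longrightarrow> adv P c \<gamma> \<pi> s (pihat s) \<le> adv P c \<gamma> \<pi> s p))"

end

theory Submission
  imports Defs
begin

text \<open>Let e_t = max_s (V^{pi_t}(s) - V^*(s)) and cut time into blocks of NT iterations. Inside
  the block starting at j, Delta_j <= e_j / (1 - gamma) gives 1 / eta_t <= e_j / ((1 - gamma) 2^(t+1)).
  A Euclidean prox step is greedy up to 1 / eta_t, so e_(t+1) <= gamma e_t + 1 / eta_t, and by the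
  end of the block e <= (1 - gamma) e_j / 2. By the performance difference lemma some action
  charged by pi_j has optimal advantage at least (1 - gamma) e_j; late in the block its
  Q^{pi_t}-value exceeds that of an optimal action by at least 2 / eta_t, and then the Euclidean
  projection puts exactly zero mass on it, at every later iteration. Hence each block eliminates a
  new strictly suboptimal state-action pair for good unless the policy is already optimal, and
  there are at most |S| (|A| - 1) such pairs. Once pi_tau is optimal, Q^{pi_tau} = Q^*, and greedy
  policies for Q^* are optimal.\<close>

section \<open>Euclidean proximal steps on the simplex\<close>

definition vertex :: "'a \<Rightarrow> 'a \<Rightarrow> real" where
  "vertex a = (\<lambda>b. if b = a then 1 else 0)"

lemma prob_simplex_vertex: "prob_simplex (vertex (a::'a::finite))"
  unfolding prob_simplex_def vertex_def by (simp add: sum.delta')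

lemma sum_mult_vertex: "(\<Sum>b\<in>UNIV. f b * vertex a b) = (f (a::'a::finite) :: real)"
  unfolding vertex_def by (simp add: if_distrib sum.delta' cong: if_cong)

lemma sum_vertex_mult: "(\<Sum>b\<in>UNIV. vertex a b * f b) = (f (a::'a::finite) :: real)"
  using sum_mult_vertex[of f a] by (simp add: mult.commute)

lemma prob_simplex_le_one:
  assumes "prob_simplex p"
  shows "p a \<le> 1"
proof -
  have "p a \<le> (\<Sum>b\<in>UNIV. p b)" by (rule member_le_sum) (use assms in \<open>auto simp: prob_simplex_def\<close>)
  thus ?thesis using assms by (simp add: prob_simplex_def)
qed

lemma convex_comb_le:
  fixes w D :: "'x::finite \<Rightarrow> real"
  assumes "\<And>x. 0 \<le> w x" "(\<Sum>x\<in>UNIV. w x) = 1" "\<And>x. D x \<le> M"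
  shows "(\<Sum>x\<in>UNIV. w x * D x) \<le> M"
proof -
  have "(\<Sum>x\<in>UNIV. w x * D x) \<le> (\<Sum>x\<in>UNIV. w x * M)"
    by (intro sum_mono mult_left_mono assms)
  also have "\<dots> = M" using assms(2) by (simp flip: sum_distrib_right)
  finally show ?thesis .
qed

lemma convex_comb_ge:
  fixes w D :: "'x::finite \<Rightarrow> real"
  assumes "\<And>x. 0 \<le> w x" "(\<Sum>x\<in>UNIV. w x) = 1" "\<And>x. M \<le> D x"
  shows "M \<le> (\<Sum>x\<in>UNIV. w x * D x)"
  using convex_comb_le[of w "\<lambda>x. - D x" "- M"] assms by (simp add: sum_negf)

lemma convex_comb_ge_imp_ex:
  fixes w D :: "'x::finite \<Rightarrow> real"
  assumes w: "prob_simplex w" and M: "M \<le> (\<Sum>x\<in>UNIV. w x * D x)"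
  shows "\<exists>x. 0 < w x \<and> M \<le> D x"
proof (rule ccontr)
  assume "\<not> ?thesis"
  hence lt: "D x < M" if "0 < w x" for x using that by force
  have w0: "0 \<le> w x" for x using w by (simp add: prob_simplex_def)
  obtain x0 where "w x0 \<noteq> 0" using w by (metis prob_simplex_def sum.neutral zero_neq_one)
  hence "0 < w x0" using w0[of x0] by simp
  have "(\<Sum>x\<in>UNIV. w x * D x) < (\<Sum>x\<in>UNIV. w x * M)"
  proof (rule sum_strict_mono_ex1)
    show "\<forall>x\<in>UNIV. w x * D x \<le> w x * M"
      using lt w0 by (metis less_eq_real_def mult_left_mono mult_zero_left)
    show "\<exists>x\<in>UNIV. w x * D x < w x * M"
      using \<open>0 < w x0\<close> lt by (auto intro: mult_strict_left_mono)
  qed simp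
  also have "\<dots> = M" using w by (simp add: prob_simplex_def flip: sum_distrib_right)
  finally show False using M by simp
qed

definition prox_obj :: "real \<Rightarrow> ('a::finite \<Rightarrow> real) \<Rightarrow> ('a \<Rightarrow> real) \<Rightarrow> ('a \<Rightarrow> real) \<Rightarrow> real" where
  "prox_obj \<eta> q p0 p = \<eta> * (\<Sum>a\<in>UNIV. q a * p a) + 1/2 * (\<Sum>a\<in>UNIV. (p a - p0 a)^2)"

lemma prox_obj_descent:
  assumes "0 \<le> \<eta>" and "prox_obj \<eta> q p0 p \<le> prox_obj \<eta> q p0 p0"
  shows "(\<Sum>a\<in>UNIV. q a * p a) \<le> (\<Sum>a\<in>UNIV. q a * p0 a)"
proof (cases "\<eta> = 0")
  case True
  hence "(\<Sum>a\<in>UNIV. (p a - p0 a)^2) \<le> 0" using assms(2) by (simp add: prox_obj_def)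
  hence "\<forall>a\<in>UNIV. (p a - p0 a)^2 = 0"
    by (intro sum_nonneg_eq_0_iff[THEN iffD1] antisym) (auto intro: sum_nonneg)
  hence "p = p0" by auto
  thus ?thesis by simp
next
  case False
  have "0 \<le> (\<Sum>a\<in>UNIV. (p a - p0 a)^2)" by (intro sum_nonneg) simp
  hence "\<eta> * (\<Sum>a\<in>UNIV. q a * p a) \<le> \<eta> * (\<Sum>a\<in>UNIV. q a * p0 a)"
    using assms(2) by (simp add: prox_obj_def)
  thus ?thesis using assms(1) False by simp
qed

lemma sum_sq_diff_vertex_le:
  assumes "prob_simplex p0"
  shows "(\<Sum>a\<in>UNIV. (vertex b a - p0 a)^2) \<le> 2"
proof -
  have "(\<Sum>a\<in>UNIV. (vertex b a - p0 a)^2) \<le> (\<Sum>a\<in>UNIV. vertex b a + p0 a)"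
  proof (rule sum_mono)
    fix a
    have "0 \<le> p0 a" "p0 a \<le> 1" using assms prob_simplex_le_one by (auto simp: prob_simplex_def)
    hence "p0 a * p0 a \<le> p0 a" by (intro mult_right_le_one_le)
    thus "(vertex b a - p0 a)^2 \<le> vertex b a + p0 a"
      using \<open>0 \<le> p0 a\<close> by (auto simp: vertex_def power2_eq_square algebra_simps)
  qed
  also have "\<dots> = 2"
    using assms prob_simplex_vertex[of b] by (simp add: sum.distrib prob_simplex_def)
  finally show ?thesis .
qed

lemma prox_obj_near_vertex:
  assumes "0 < \<eta>" and "prob_simplex p0"
    and "prox_obj \<eta> q p0 p \<le> prox_obj \<eta> q p0 (vertex b)"
  shows "(\<Sum>a\<in>UNIV. q a * p a) \<le> q b + 1 / \<eta>"
proof -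
  have "0 \<le> (\<Sum>a\<in>UNIV. (p a - p0 a)^2)" by (intro sum_nonneg) simp
  hence "\<eta> * (\<Sum>a\<in>UNIV. q a * p a) \<le> \<eta> * q b + 1"
    using assms(3) sum_sq_diff_vertex_le[OF assms(2), of b]
    by (simp add: prox_obj_def sum_mult_vertex)
  thus ?thesis using assms(1) by (simp add: field_simps)
qed

lemma prox_obj_shift:
  assumes "a0 \<noteq> a1"
  shows "prox_obj \<eta> q p0 (\<lambda>x. p x + \<epsilon> * (vertex a1 x - vertex a0 x)) - prox_obj \<eta> q p0 p
    = \<epsilon> * (\<eta> * (q a1 - q a0) + (p a1 - p0 a1) - (p a0 - p0 a0) + \<epsilon>)"
proof -
  let ?d = "\<lambda>x. vertex a1 x - vertex a0 x"
  have d: "(\<Sum>x\<in>UNIV. f x * ?d x) = f a1 - f a0" for f :: "'a \<Rightarrow> real"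
    by (simp add: right_diff_distrib sum_subtractf sum_mult_vertex)
  have dsq: "(\<Sum>x\<in>UNIV. (?d x)^2) = 2"
    using d[of ?d] assms by (simp add: power2_eq_square vertex_def)
  have sq: "(\<Sum>x\<in>UNIV. (p x + \<epsilon> * ?d x - p0 x)^2) = (\<Sum>x\<in>UNIV. (p x - p0 x)^2)
      + 2 * \<epsilon> * ((p a1 - p0 a1) - (p a0 - p0 a0)) + \<epsilon>^2 * 2"
  proof -
    have "(p x + \<epsilon> * ?d x - p0 x)^2
        = (p x - p0 x)^2 + 2 * \<epsilon> * ((p x - p0 x) * ?d x) + \<epsilon>^2 * (?d x)^2" for x
      by (simp add: power2_eq_square algebra_simps)
    hence "(\<Sum>x\<in>UNIV. (p x + \<epsilon> * ?d x - p0 x)^2) = (\<Sum>x\<in>UNIV. (p x - p0 x)^2)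
        + 2 * \<epsilon> * (\<Sum>x\<in>UNIV. (p x - p0 x) * ?d x) + \<epsilon>^2 * (\<Sum>x\<in>UNIV. (?d x)^2)"
      by (simp add: sum.distrib sum_distrib_left)
    thus ?thesis by (simp only: d dsq)
  qed
  have lin: "(\<Sum>x\<in>UNIV. q x * (p x + \<epsilon> * ?d x)) = (\<Sum>x\<in>UNIV. q x * p x) + \<epsilon> * (q a1 - q a0)"
  proof -
    have "(\<Sum>x\<in>UNIV. q x * (p x + \<epsilon> * ?d x))
        = (\<Sum>x\<in>UNIV. q x * p x) + \<epsilon> * (\<Sum>x\<in>UNIV. q x * ?d x)"
      by (simp add: distrib_left sum.distrib sum_distrib_left mult.left_commute)
    thus ?thesis by (simp only: d)
  qed
  show ?thesis unfolding prox_obj_def sq lin by (simp add: algebra_simps power2_eq_square)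
qed

lemma prob_simplex_shift:
  assumes "prob_simplex p" "a0 \<noteq> a1" "0 \<le> \<epsilon>" "\<epsilon> \<le> p a0"
  shows "prob_simplex (\<lambda>x. p x + \<epsilon> * (vertex a1 x - vertex a0 x))"
  using assms prob_simplex_vertex[of a0] prob_simplex_vertex[of a1]
  unfolding prob_simplex_def
  by (auto simp: vertex_def sum.distrib right_diff_distrib sum_subtractf
      simp flip: sum_distrib_left)

text \<open>On the simplex \<open>(p a1 - p0 a1) - (p a0 - p0 a0) \<le> 2 - p a0\<close>, so once
  \<open>\<eta> (q a0 - q a1) \<ge> 2\<close>, moving half of the mass of \<open>a0\<close> to \<open>a1\<close> would decrease the objective.\<close>
lemma prox_argmin_vanishes:
  assumes p0: "prob_simplex p0" and p: "prob_simplex p"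
    and min: "\<And>p'. prob_simplex p' \<Longrightarrow> prox_obj \<eta> q p0 p \<le> prox_obj \<eta> q p0 p'"
    and big: "2 \<le> \<eta> * (q a0 - q a1)"
  shows "p a0 = 0"
proof (rule ccontr)
  assume "p a0 \<noteq> 0"
  moreover have "0 \<le> p a0" using p by (simp add: prob_simplex_def)
  ultimately have pos: "0 < p a0" by simp
  have ne: "a0 \<noteq> a1" using big by auto
  define \<epsilon> where "\<epsilon> = p a0 / 2"
  let ?p' = "\<lambda>x. p x + \<epsilon> * (vertex a1 x - vertex a0 x)"
  have "prob_simplex ?p'" using pos by (intro prob_simplex_shift[OF p ne]) (auto simp: \<epsilon>_def)
  moreover have "\<eta> * (q a1 - q a0) + (p a1 - p0 a1) - (p a0 - p0 a0) + \<epsilon> < 0"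
  proof -
    have "\<eta> * (q a1 - q a0) \<le> -2" using big by (simp add: algebra_simps)
    moreover have "0 \<le> p0 a1" using p0 by (simp add: prob_simplex_def)
    ultimately show ?thesis
      using pos prob_simplex_le_one[OF p, of a1] prob_simplex_le_one[OF p0, of a0]
      unfolding \<epsilon>_def by linarith
  qed
  hence "\<epsilon> * (\<eta> * (q a1 - q a0) + (p a1 - p0 a1) - (p a0 - p0 a0) + \<epsilon>) < 0"
    using pos by (intro mult_pos_neg) (simp_all add: \<epsilon>_def)
  hence "prox_obj \<eta> q p0 ?p' < prox_obj \<eta> q p0 p"
    using prox_obj_shift[OF ne, of \<eta> q p0 p \<epsilon>] by linarith
  ultimately show False using min by fastforce
qed

section \<open>Policy evaluation\<close>

lemma is_policy_nonneg: "is_policy \<pi> \<Longrightarrow> 0 \<le> \<pi> s a"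
  unfolding is_policy_def prob_simplex_def by simp

lemma is_policy_sum: "is_policy \<pi> \<Longrightarrow> (\<Sum>a\<in>UNIV. \<pi> s a) = 1"
  unfolding is_policy_def prob_simplex_def by simp

definition deterministic :: "('s \<Rightarrow> 'a) \<Rightarrow> 's \<Rightarrow> 'a \<Rightarrow> real" where
  "deterministic d = (\<lambda>s. vertex (d s))"

lemma is_policy_deterministic: "is_policy (deterministic (d :: 's \<Rightarrow> 'a::finite))"
  unfolding is_policy_def deterministic_def by (simp add: prob_simplex_vertex)

locale mdp =
  fixes P :: "'s::finite \<Rightarrow> 'a::finite \<Rightarrow> 's \<Rightarrow> real"
    and c :: "'s \<Rightarrow> 'a \<Rightarrow> real"
    and \<gamma> :: real
  assumes stochastic: "stochastic_kernel P"
    and discount_nonneg: "0 \<le> \<gamma>" and discount_less_one: "\<gamma> < 1"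
begin

abbreviation V where "V \<pi> \<equiv> Vf P c \<gamma> \<pi>"
abbreviation Q where "Q \<pi> \<equiv> Qf P c \<gamma> \<pi>"

lemma P_nonneg: "0 \<le> P s a s'"
  using stochastic unfolding stochastic_kernel_def by auto

lemma P_sum: "(\<Sum>s'\<in>UNIV. P s a s') = 1"
  using stochastic unfolding stochastic_kernel_def by auto

lemma Ppi_nonneg: "is_policy \<pi> \<Longrightarrow> 0 \<le> Ppi P \<pi> s s'"
  unfolding Ppi_def by (intro sum_nonneg mult_nonneg_nonneg P_nonneg is_policy_nonneg)

lemma Ppi_sum: "is_policy \<pi> \<Longrightarrow> (\<Sum>s'\<in>UNIV. Ppi P \<pi> s s') = 1"
  unfolding Ppi_def
  by (subst sum.swap) (simp add: is_policy_sum P_sum flip: sum_distrib_left)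

lemma Ppi_deterministic: "Ppi P (deterministic d) s s' = P s (d s) s'"
  unfolding Ppi_def deterministic_def by (rule sum_vertex_mult)

lemma Pn_Suc_left: "Pn P \<pi> (Suc n) s s' = (\<Sum>s''\<in>UNIV. Ppi P \<pi> s s'' * Pn P \<pi> n s'' s')"
proof (induction n arbitrary: s s')
  case 0
  show ?case by (simp add: if_distrib sum.delta sum.delta' if_distribR cong: if_cong)
next
  case (Suc n)
  have "Pn P \<pi> (Suc (Suc n)) s s'
      = (\<Sum>s''\<in>UNIV. \<Sum>x\<in>UNIV. Ppi P \<pi> s x * (Pn P \<pi> n x s'' * Ppi P \<pi> s'' s'))"
    by (subst Pn.simps(2), simp only: Suc.IH) (simp add: sum_distrib_right mult.assoc)
  also have "\<dots> = (\<Sum>x\<in>UNIV. Ppi P \<pi> s x * Pn P \<pi> (Suc n) x s')"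
    by (subst sum.swap) (simp add: sum_distrib_left)
  finally show ?case .
qed

lemma Pn_nonneg: "is_policy \<pi> \<Longrightarrow> 0 \<le> Pn P \<pi> n s s'"
  by (induction n arbitrary: s') (auto intro!: sum_nonneg mult_nonneg_nonneg Ppi_nonneg)

lemma Pn_sum: "is_policy \<pi> \<Longrightarrow> (\<Sum>s'\<in>UNIV. Pn P \<pi> n s s') = 1"
proof (induction n)
  case (Suc n)
  have "(\<Sum>s'\<in>UNIV. Pn P \<pi> (Suc n) s s') = (\<Sum>x\<in>UNIV. Pn P \<pi> n s x * (\<Sum>s'\<in>UNIV. Ppi P \<pi> x s'))"
    by (simp add: sum_distrib_left) (rule sum.swap)
  thus ?case using Suc by (simp add: Ppi_sum)
qed simp

lemma Pn_le_one: "is_policy \<pi> \<Longrightarrow> Pn P \<pi> n s s' \<le> 1"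
  using member_le_sum[of s' UNIV "Pn P \<pi> n s"] by (simp add: Pn_nonneg Pn_sum)

definition exp_cost :: "('s \<Rightarrow> 'a \<Rightarrow> real) \<Rightarrow> 's \<Rightarrow> real" where
  "exp_cost \<pi> s = (\<Sum>a\<in>UNIV. \<pi> s a * c s a)"

definition stage_cost :: "('s \<Rightarrow> 'a \<Rightarrow> real) \<Rightarrow> nat \<Rightarrow> 's \<Rightarrow> real" where
  "stage_cost \<pi> t s = (\<Sum>s'\<in>UNIV. Pn P \<pi> t s s' * exp_cost \<pi> s')"

definition bellman_op :: "('s \<Rightarrow> 'a \<Rightarrow> real) \<Rightarrow> ('s \<Rightarrow> real) \<Rightarrow> 's \<Rightarrow> real" where
  "bellman_op \<pi> W s = exp_cost \<pi> s + \<gamma> * (\<Sum>s'\<in>UNIV. Ppi P \<pi> s s' * W s')"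

lemma bellman_op_deterministic:
  "bellman_op (deterministic d) W s = c s (d s) + \<gamma> * (\<Sum>s'\<in>UNIV. P s (d s) s' * W s')"
  unfolding bellman_op_def exp_cost_def Ppi_deterministic
  by (simp add: deterministic_def sum_vertex_mult)

lemma Q_eq_bellman_op_deterministic: "Q \<pi> s (d s) = bellman_op (deterministic d) (V \<pi>) s"
  unfolding bellman_op_deterministic Qf_def ..

lemma V_eq_suminf_stage_cost: "V \<pi> s = (\<Sum>t. \<gamma> ^ t * stage_cost \<pi> t s)"
  unfolding Vf_def stage_cost_def exp_cost_def ..

lemma stage_cost_0: "stage_cost \<pi> 0 s = exp_cost \<pi> s"
  unfolding stage_cost_def by (simp add: if_distrib sum.delta if_distribR cong: if_cong)

lemma stage_cost_Suc: "stage_cost \<pi> (Suc t) s = (\<Sum>s'\<in>UNIV. Ppi P \<pi> s s' * stage_cost \<pi> t s')"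
  unfolding stage_cost_def Pn_Suc_left
  by (simp add: sum_distrib_right sum_distrib_left mult.assoc) (rule sum.swap)

lemma abs_stage_cost_le: "is_policy \<pi> \<Longrightarrow> \<bar>stage_cost \<pi> t s\<bar> \<le> (\<Sum>s'\<in>UNIV. \<bar>exp_cost \<pi> s'\<bar>)"
  unfolding stage_cost_def
  by (rule order_trans[OF sum_abs], rule sum_mono)
     (simp add: abs_mult Pn_nonneg Pn_le_one mult_left_le_one_le)

lemma summable_stage_cost: "is_policy \<pi> \<Longrightarrow> summable (\<lambda>t. \<gamma> ^ t * stage_cost \<pi> t s)"
proof (rule summable_comparison_test')
  show "summable (\<lambda>t. (\<Sum>s'\<in>UNIV. \<bar>exp_cost \<pi> s'\<bar>) * \<gamma> ^ t)"
    using discount_nonneg discount_less_one by (intro summable_mult summable_geometric) simp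
  show "norm (\<gamma> ^ t * stage_cost \<pi> t s) \<le> (\<Sum>s'\<in>UNIV. \<bar>exp_cost \<pi> s'\<bar>) * \<gamma> ^ t"
    if "is_policy \<pi>" for t
    using mult_left_mono[OF abs_stage_cost_le[OF that] zero_le_power[OF discount_nonneg]]
    by (simp add: abs_mult discount_nonneg mult.commute)
qed

lemma V_eq_bellman_op:
  assumes \<pi>: "is_policy \<pi>"
  shows "V \<pi> s = bellman_op \<pi> (V \<pi>) s"
proof -
  let ?f = "\<lambda>s t. \<gamma> ^ t * stage_cost \<pi> t s"
  have "(\<Sum>t. ?f s (Suc t)) = (\<Sum>t. \<gamma> * (\<Sum>s'\<in>UNIV. Ppi P \<pi> s s' * ?f s' t))"
    by (simp add: stage_cost_Suc sum_distrib_left mult.assoc mult.left_commute)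
  also have "\<dots> = \<gamma> * (\<Sum>s'\<in>UNIV. Ppi P \<pi> s s' * V \<pi> s')"
    using summable_stage_cost[OF \<pi>]
    by (simp add: suminf_mult summable_sum suminf_sum V_eq_suminf_stage_cost flip: suminf_mult2)
  finally have "(\<Sum>t. ?f s (Suc t)) = \<gamma> * (\<Sum>s'\<in>UNIV. Ppi P \<pi> s s' * V \<pi> s')" .
  thus ?thesis
    using suminf_split_head[OF summable_stage_cost[OF \<pi>, of s]]
    by (simp add: bellman_op_def V_eq_suminf_stage_cost stage_cost_0)
qed

text \<open>Maximum principle: evaluate the hypothesis at a maximiser of \<open>D\<close>.\<close>
lemma le_discounted_average_bound:
  assumes \<pi>: "is_policy \<pi>" and D: "\<And>s. D s \<le> \<gamma> * (\<Sum>s'\<in>UNIV. Ppi P \<pi> s s' * D s') + b"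
  shows "D s \<le> b / (1 - \<gamma>)"
proof -
  have "Max (range D) \<in> range D" by (rule Max_in) auto
  then obtain s0 where s0: "D s0 = Max (range D)" by (metis rangeE)
  have DM: "D x \<le> D s0" for x unfolding s0 by simp
  have "(\<Sum>s'\<in>UNIV. Ppi P \<pi> s0 s' * D s') \<le> D s0"
    by (rule convex_comb_le[OF Ppi_nonneg[OF \<pi>] Ppi_sum[OF \<pi>] DM])
  hence "\<gamma> * (\<Sum>s'\<in>UNIV. Ppi P \<pi> s0 s' * D s') \<le> \<gamma> * D s0"
    by (rule mult_left_mono[OF _ discount_nonneg])
  hence "D s0 \<le> \<gamma> * D s0 + b" using D[of s0] by linarith
  hence "D s0 \<le> b / (1 - \<gamma>)" using discount_less_one by (simp add: field_simps)
  thus ?thesis using DM[of s] by linarith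
qed

lemma V_le_if_bellman_op_le:
  assumes \<pi>: "is_policy \<pi>" and W: "\<And>s. bellman_op \<pi> W s \<le> W s"
  shows "V \<pi> s \<le> W s"
proof -
  have "V \<pi> s - W s \<le> 0 / (1 - \<gamma>)"
  proof (rule le_discounted_average_bound[OF \<pi>])
    show "V \<pi> s - W s \<le> \<gamma> * (\<Sum>s'\<in>UNIV. Ppi P \<pi> s s' * (V \<pi> s' - W s')) + 0" for s
      using V_eq_bellman_op[OF \<pi>, of s] W[of s]
      by (simp add: bellman_op_def right_diff_distrib sum_subtractf)
  qed
  thus ?thesis by simp
qed

lemma V_ge_if_le_bellman_op:
  assumes \<pi>: "is_policy \<pi>" and W: "\<And>s. W s \<le> bellman_op \<pi> W s"
  shows "W s \<le> V \<pi> s"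
proof -
  have "W s - V \<pi> s \<le> 0 / (1 - \<gamma>)"
  proof (rule le_discounted_average_bound[OF \<pi>])
    show "W s - V \<pi> s \<le> \<gamma> * (\<Sum>s'\<in>UNIV. Ppi P \<pi> s s' * (W s' - V \<pi> s')) + 0" for s
      using V_eq_bellman_op[OF \<pi>, of s] W[of s]
      by (simp add: bellman_op_def right_diff_distrib sum_subtractf)
  qed
  thus ?thesis by simp
qed

lemma sum_policy_Q: "(\<Sum>a\<in>UNIV. \<pi>' s a * Q \<pi> s a) = bellman_op \<pi>' (V \<pi>) s"
proof -
  have "(\<Sum>a\<in>UNIV. \<pi>' s a * Q \<pi> s a)
      = exp_cost \<pi>' s + \<gamma> * (\<Sum>a\<in>UNIV. \<Sum>s'\<in>UNIV. \<pi>' s a * P s a s' * V \<pi> s')"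
    unfolding Qf_def exp_cost_def by (simp add: algebra_simps sum.distrib sum_distrib_left)
  also have "\<dots> = bellman_op \<pi>' (V \<pi>) s"
    unfolding bellman_op_def Ppi_def by (subst sum.swap) (simp add: sum_distrib_right)
  finally show ?thesis .
qed

lemma sum_policy_Q_self: "is_policy \<pi> \<Longrightarrow> (\<Sum>a\<in>UNIV. \<pi> s a * Q \<pi> s a) = V \<pi> s"
  unfolding sum_policy_Q by (rule V_eq_bellman_op[symmetric])

end

section \<open>The optimal policy\<close>

context mdp
begin

text \<open>Among the finitely many deterministic policies, one minimising \<open>\<Sum>s. V (deterministic d) s\<close>
  admits no improving one-state deviation, hence satisfies the Bellman optimality equation.\<close>
definition d_opt :: "'s \<Rightarrow> 'a" where
  "d_opt = arg_min_on (\<lambda>d. \<Sum>s\<in>UNIV. V (deterministic d) s) UNIV"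

abbreviation Vopt where "Vopt \<equiv> V (deterministic d_opt)"
abbreviation Qopt where "Qopt \<equiv> Q (deterministic d_opt)"

lemma sum_Vopt_le: "(\<Sum>s\<in>UNIV. Vopt s) \<le> (\<Sum>s\<in>UNIV. V (deterministic d) s)"
  unfolding d_opt_def by (rule arg_min_least[where f = "\<lambda>d. \<Sum>s\<in>UNIV. V (deterministic d) s"]) auto

lemma Vopt_eq_Qopt: "Vopt s = Qopt s (d_opt s)"
  unfolding Q_eq_bellman_op_deterministic by (rule V_eq_bellman_op[OF is_policy_deterministic])

lemma Vopt_le_Qopt: "Vopt s \<le> Qopt s a"
proof (rule ccontr)
  assume "\<not> Vopt s \<le> Qopt s a"
  hence lt: "Qopt s a < Vopt s" by simp
  define d where "d = d_opt(s := a)"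
  have Qd: "Qopt x (d x) = bellman_op (deterministic d) Vopt x" for x
    by (rule Q_eq_bellman_op_deterministic)
  have le: "V (deterministic d) x \<le> Vopt x" for x
  proof (rule V_le_if_bellman_op_le[OF is_policy_deterministic])
    show "bellman_op (deterministic d) Vopt x \<le> Vopt x" for x
      using lt Vopt_eq_Qopt[of x] unfolding Qd[symmetric] by (cases "x = s") (auto simp: d_def)
  qed
  have "V (deterministic d) s = c s a + \<gamma> * (\<Sum>s'\<in>UNIV. P s a s' * V (deterministic d) s')"
    using V_eq_bellman_op[OF is_policy_deterministic, of d s]
    by (simp add: bellman_op_deterministic d_def)
  also have "\<dots> \<le> Qopt s a"
    unfolding Qf_def by (intro add_left_mono mult_left_mono sum_mono discount_nonneg P_nonneg le)
  finally have "V (deterministic d) s < Vopt s" using lt by linarith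
  hence "(\<Sum>x\<in>UNIV. V (deterministic d) x) < (\<Sum>x\<in>UNIV. Vopt x)"
    by (intro sum_strict_mono_ex1) (auto intro: le)
  thus False using sum_Vopt_le[of d] by simp
qed

lemma Vopt_le_V:
  assumes \<pi>: "is_policy \<pi>"
  shows "Vopt s \<le> V \<pi> s"
proof (rule V_ge_if_le_bellman_op[OF \<pi>])
  show "Vopt s \<le> bellman_op \<pi> Vopt s" for s
    unfolding sum_policy_Q[symmetric]
    by (intro convex_comb_ge is_policy_nonneg[OF \<pi>] is_policy_sum[OF \<pi>] Vopt_le_Qopt)
qed

lemma Qopt_le_Q: "is_policy \<pi> \<Longrightarrow> Qopt s a \<le> Q \<pi> s a"
  unfolding Qf_def by (intro add_left_mono mult_left_mono sum_mono discount_nonneg P_nonneg Vopt_le_V)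

definition subopt :: "('s \<Rightarrow> 'a \<Rightarrow> real) \<Rightarrow> real" where
  "subopt \<pi> = Max (range (\<lambda>s. V \<pi> s - Vopt s))"

lemma V_sub_Vopt_le_subopt: "V \<pi> s - Vopt s \<le> subopt \<pi>"
  unfolding subopt_def by simp

lemma subopt_attained: "\<exists>s. V \<pi> s - Vopt s = subopt \<pi>"
proof -
  have "subopt \<pi> \<in> range (\<lambda>s. V \<pi> s - Vopt s)" unfolding subopt_def by (rule Max_in) auto
  thus ?thesis by auto
qed

lemma subopt_nonneg: "is_policy \<pi> \<Longrightarrow> 0 \<le> subopt \<pi>"
  using V_sub_Vopt_le_subopt[of \<pi>] Vopt_le_V[of \<pi>] by (metis diff_ge_0_iff_ge order_trans)

lemma V_eq_Vopt_if_subopt_eq_0: "is_policy \<pi> \<Longrightarrow> subopt \<pi> = 0 \<Longrightarrow> V \<pi> s = Vopt s"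
  using V_sub_Vopt_le_subopt[of \<pi> s] Vopt_le_V[of \<pi> s] by simp

lemma Q_le_Qopt_add_subopt: "Q \<pi> s a \<le> Qopt s a + \<gamma> * subopt \<pi>"
proof -
  have "Q \<pi> s a - Qopt s a = \<gamma> * (\<Sum>s'\<in>UNIV. P s a s' * (V \<pi> s' - Vopt s'))"
    unfolding Qf_def by (simp add: algebra_simps sum_subtractf)
  also have "\<dots> \<le> \<gamma> * subopt \<pi>"
    by (intro mult_left_mono discount_nonneg convex_comb_le P_nonneg P_sum V_sub_Vopt_le_subopt)
  finally show ?thesis by simp
qed

lemma performance_difference:
  assumes \<pi>: "is_policy \<pi>"
  shows "V \<pi> s - Vopt s = (\<Sum>a\<in>UNIV. \<pi> s a * (Qopt s a - Vopt s))
           + \<gamma> * (\<Sum>s'\<in>UNIV. Ppi P \<pi> s s' * (V \<pi> s' - Vopt s'))"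
proof -
  have "(\<Sum>a\<in>UNIV. \<pi> s a * (Qopt s a - Vopt s)) = bellman_op \<pi> Vopt s - Vopt s"
    using is_policy_sum[OF \<pi>, of s]
    by (simp add: right_diff_distrib sum_subtractf sum_policy_Q flip: sum_distrib_right)
  thus ?thesis using V_eq_bellman_op[OF \<pi>, of s]
    by (simp add: bellman_op_def right_diff_distrib sum_subtractf)
qed

lemma V_eq_Vopt_if_supported_on_optimal:
  assumes \<pi>: "is_policy \<pi>" and opt: "\<And>s a. \<pi> s a \<noteq> 0 \<Longrightarrow> Qopt s a = Vopt s"
  shows "V \<pi> s = Vopt s"
proof -
  have "(\<Sum>a\<in>UNIV. \<pi> s a * (Qopt s a - Vopt s)) = 0" for s
    by (rule sum.neutral) (use opt in force)
  hence "V \<pi> s - Vopt s \<le> \<gamma> * (\<Sum>s'\<in>UNIV. Ppi P \<pi> s s' * (V \<pi> s' - Vopt s')) + 0" for s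
    using performance_difference[OF \<pi>, of s] by simp
  hence "V \<pi> s - Vopt s \<le> 0 / (1 - \<gamma>)" by (rule le_discounted_average_bound[OF \<pi>])
  thus ?thesis using Vopt_le_V[OF \<pi>, of s] by simp
qed

lemma optimal_policy_vanishes_on_suboptimal:
  assumes \<pi>: "is_policy \<pi>" and opt: "\<And>s. V \<pi> s = Vopt s" and a: "Vopt s < Qopt s a"
  shows "\<pi> s a = 0"
proof -
  have "(\<Sum>a\<in>UNIV. \<pi> s a * (Qopt s a - Vopt s)) = 0"
    using performance_difference[OF \<pi>, of s] by (simp add: opt)
  moreover have "\<forall>a\<in>UNIV. 0 \<le> \<pi> s a * (Qopt s a - Vopt s)"
    using is_policy_nonneg[OF \<pi>] Vopt_le_Qopt by simp
  ultimately have "\<pi> s a * (Qopt s a - Vopt s) = 0" by (simp add: sum_nonneg_eq_0_iff)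
  thus ?thesis using a by simp
qed

lemma subopt_le_optimal_advantage:
  assumes \<pi>: "is_policy \<pi>"
  shows "\<exists>s a. 0 < \<pi> s a \<and> (1 - \<gamma>) * subopt \<pi> \<le> Qopt s a - Vopt s"
proof -
  obtain s where s: "V \<pi> s - Vopt s = subopt \<pi>" using subopt_attained by blast
  have "(\<Sum>s'\<in>UNIV. Ppi P \<pi> s s' * (V \<pi> s' - Vopt s')) \<le> subopt \<pi>"
    by (rule convex_comb_le[OF Ppi_nonneg[OF \<pi>] Ppi_sum[OF \<pi>] V_sub_Vopt_le_subopt])
  hence "\<gamma> * (\<Sum>s'\<in>UNIV. Ppi P \<pi> s s' * (V \<pi> s' - Vopt s')) \<le> \<gamma> * subopt \<pi>"
    by (rule mult_left_mono[OF _ discount_nonneg])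
  hence "(1 - \<gamma>) * subopt \<pi> \<le> (\<Sum>a\<in>UNIV. \<pi> s a * (Qopt s a - Vopt s))"
    using performance_difference[OF \<pi>, of s] s by (simp add: left_diff_distrib)
  moreover have "prob_simplex (\<pi> s)" using \<pi> by (simp add: is_policy_def)
  ultimately have "\<exists>a. 0 < \<pi> s a \<and> (1 - \<gamma>) * subopt \<pi> \<le> Qopt s a - Vopt s"
    using convex_comb_ge_imp_ex[of "\<pi> s" "(1 - \<gamma>) * subopt \<pi>" "\<lambda>a. Qopt s a - Vopt s"] by blast
  thus ?thesis by blast
qed

lemma two_le_card_if_suboptimal: "Vopt s < Qopt s a \<Longrightarrow> 2 \<le> CARD('a)"
proof -
  assume "Vopt s < Qopt s a"
  hence "a \<noteq> d_opt s" using Vopt_eq_Qopt[of s] by auto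
  hence "card {a, d_opt s} = 2" by simp
  moreover have "card {a, d_opt s} \<le> CARD('a)" by (rule card_mono) auto
  ultimately show ?thesis by simp
qed

lemma gap_eq: "gap P c \<gamma> \<pi> s = V \<pi> s - Min (range (Q \<pi> s))"
proof -
  have "Min (range (Q \<pi> s)) \<in> range (Q \<pi> s)" by (rule Min_in) auto
  then obtain a where a: "Q \<pi> s a = Min (range (Q \<pi> s))" by (metis rangeE)
  have "V \<pi> s - Min (range (Q \<pi> s)) = - adv P c \<gamma> \<pi> s (vertex a)"
    unfolding adv_def sum_mult_vertex a by simp
  hence mem: "V \<pi> s - Min (range (Q \<pi> s)) \<in> {- adv P c \<gamma> \<pi> s p | p. prob_simplex p}"
    using prob_simplex_vertex[of a] by blast
  have "Min (range (Q \<pi> s)) \<le> (\<Sum>a\<in>UNIV. p a * Q \<pi> s a)" if "prob_simplex p" for p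
    using that unfolding prob_simplex_def by (intro convex_comb_ge) auto
  hence Min_le_avg: "Min (range (Q \<pi> s)) \<le> (\<Sum>a\<in>UNIV. Q \<pi> s a * p a)" if "prob_simplex p" for p
    using that by (simp add: mult.commute)
  have "x \<le> V \<pi> s - Min (range (Q \<pi> s))" if x: "x \<in> {- adv P c \<gamma> \<pi> s p | p. prob_simplex p}" for x
  proof -
    obtain p where "prob_simplex p" "x = - adv P c \<gamma> \<pi> s p" using x by blast
    thus ?thesis using Min_le_avg[of p] unfolding adv_def by linarith
  qed
  thus ?thesis unfolding gap_def by (rule cSup_eq_maximum[OF mem])
qed

lemma gap_nonneg: "is_policy \<pi> \<Longrightarrow> 0 \<le> gap P c \<gamma> \<pi> s"
  unfolding gap_eq sum_policy_Q_self[symmetric]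
  by (simp add: convex_comb_ge is_policy_nonneg is_policy_sum)

lemma gap_le_subopt:
  assumes \<pi>: "is_policy \<pi>"
  shows "gap P c \<gamma> \<pi> s \<le> subopt \<pi>"
proof -
  have "Vopt s \<le> Q \<pi> s a" for a using Vopt_le_Qopt Qopt_le_Q[OF \<pi>] by (rule order_trans)
  hence "Vopt s \<le> Min (range (Q \<pi> s))" by simp
  thus ?thesis unfolding gap_eq using V_sub_Vopt_le_subopt[of \<pi> s] by linarith
qed

lemma subopt_eq_0_if_gap_eq_0:
  assumes \<pi>: "is_policy \<pi>" and gap: "\<And>s. gap P c \<gamma> \<pi> s = 0"
  shows "subopt \<pi> = 0"
proof -
  have "V \<pi> s \<le> Vopt s" for s
  proof (rule V_ge_if_le_bellman_op[OF is_policy_deterministic])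
    show "V \<pi> s \<le> bellman_op (deterministic d_opt) (V \<pi>) s" for s
      using gap[of s] unfolding gap_eq Q_eq_bellman_op_deterministic[symmetric] by simp
  qed
  moreover obtain s where "V \<pi> s - Vopt s = subopt \<pi>" using subopt_attained by blast
  ultimately show ?thesis using subopt_nonneg[OF \<pi>] by (metis antisym diff_le_0_iff_le)
qed

lemma Delta_nonneg: "is_policy (pis j) \<Longrightarrow> 0 \<le> Delta P c \<gamma> pis j"
  unfolding Delta_def using discount_less_one gap_nonneg
  by (auto intro!: mult_nonneg_nonneg simp: Max_ge_iff)

lemma Delta_le_subopt: "is_policy (pis j) \<Longrightarrow> Delta P c \<gamma> pis j \<le> subopt (pis j) / (1 - \<gamma>)"
  unfolding Delta_def using discount_less_one gap_le_subopt by (simp add: divide_right_mono)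

lemma subopt_eq_0_if_Delta_eq_0:
  assumes \<pi>: "is_policy (pis j)" and "Delta P c \<gamma> pis j = 0"
  shows "subopt (pis j) = 0"
proof (rule subopt_eq_0_if_gap_eq_0[OF \<pi>])
  have "(MAX s\<in>UNIV. gap P c \<gamma> (pis j) s) = 0"
    using assms(2) discount_less_one by (simp add: Delta_def)
  thus "gap P c \<gamma> (pis j) s = 0" for s
    using Max_ge[of "range (gap P c \<gamma> (pis j))"] gap_nonneg[OF \<pi>, of s] by (simp add: antisym)
qed

definition suboptimal_pairs :: "('s \<times> 'a) set" where
  "suboptimal_pairs = {(s, a). Vopt s < Qopt s a}"

lemma card_suboptimal_pairs: "card suboptimal_pairs \<le> CARD('s) * (CARD('a) - 1)"
proof -
  define R where "R = range (\<lambda>s. (s, d_opt s))"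
  have "suboptimal_pairs \<subseteq> UNIV - R" unfolding suboptimal_pairs_def R_def using Vopt_eq_Qopt by auto
  hence "card suboptimal_pairs \<le> card (UNIV - R)" by (intro card_mono) auto
  also have "\<dots> = CARD('s \<times> 'a) - card R" by (rule card_Diff_subset) auto
  also have "card R = CARD('s)" unfolding R_def by (rule card_image) (auto simp: inj_on_def)
  also have "CARD('s \<times> 'a) = CARD('s) * CARD('a)"
    by (simp add: card_cartesian_product flip: UNIV_Times_UNIV)
  finally show ?thesis by (simp add: diff_mult_distrib2)
qed

lemma greedy_of_optimal_is_optimal:
  assumes \<pi>: "is_policy \<pi>" and opt: "\<And>s. V \<pi> s = Vopt s" and greedy: "is_greedy P c \<gamma> \<pi> pihat"
  shows "optimal_policy P c \<gamma> pihat"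
proof -
  have Q: "Q \<pi> = Qopt" using opt unfolding Qf_def by simp
  have "\<exists>a. pihat s = vertex a" for s
    using greedy unfolding is_greedy_def vertex_def by blast
  hence pihat: "is_policy pihat" unfolding is_policy_def using prob_simplex_vertex by metis
  have "bellman_op pihat Vopt s = Vopt s" for s
  proof (rule antisym)
    have "adv P c \<gamma> \<pi> s (pihat s) \<le> adv P c \<gamma> \<pi> s (vertex (d_opt s))"
      using greedy prob_simplex_vertex unfolding is_greedy_def by blast
    thus "bellman_op pihat Vopt s \<le> Vopt s"
      unfolding adv_def Q sum_policy_Q[symmetric] sum_mult_vertex Vopt_eq_Qopt[of s]
      by (simp add: mult.commute)
    show "Vopt s \<le> bellman_op pihat Vopt s"
      unfolding sum_policy_Q[symmetric]
      by (intro convex_comb_ge is_policy_nonneg[OF pihat] is_policy_sum[OF pihat] Vopt_le_Qopt)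
  qed
  hence "V pihat s = Vopt s" for s
    using V_le_if_bellman_op_le[OF pihat] V_ge_if_le_bellman_op[OF pihat] by (metis order_refl antisym)
  thus ?thesis unfolding optimal_policy_def using pihat Vopt_le_V by simp
qed

end

section \<open>Step-size parameters\<close>

lemma N_param_ge: "4 / (1 - \<gamma>) \<le> real (N_param \<gamma>)"
  unfolding N_param_def by (rule real_nat_ceiling_ge)

lemma four_le_N_param:
  assumes "0 \<le> \<gamma>" "\<gamma> < 1"
  shows "4 \<le> N_param \<gamma>"
proof -
  have "4 \<le> 4 / (1 - \<gamma>)" using assms by (simp add: le_divide_eq)
  thus ?thesis using N_param_ge[of \<gamma>] by linarith
qed

lemma power_N_param_le:
  assumes "0 \<le> \<gamma>" "\<gamma> < 1"
  shows "\<gamma> ^ (N_param \<gamma> - 2) \<le> 1 / 2"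
proof -
  define k where "k = N_param \<gamma> - 2"
  have "4 \<le> real (N_param \<gamma>) * (1 - \<gamma>)"
    using N_param_ge[of \<gamma>] assms by (simp add: divide_le_eq)
  moreover have "real (N_param \<gamma>) = real k + 2" using four_le_N_param[OF assms] by (simp add: k_def)
  moreover have "\<gamma> * real (N_param \<gamma>) = \<gamma> * real k + 2 * \<gamma>"
    unfolding \<open>real (N_param \<gamma>) = _\<close> by (simp add: algebra_simps)
  ultimately have "1 \<le> real k * (1 - \<gamma>)" using assms by (simp add: algebra_simps)
  have "\<gamma> ^ k \<le> exp (\<gamma> - 1) ^ k"
    using assms(1) exp_ge_add_one_self[of "\<gamma> - 1"] by (intro power_mono) auto
  also have "\<dots> = exp (- (real k * (1 - \<gamma>)))" by (simp add: exp_of_nat_mult[symmetric] algebra_simps)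
  also have "\<dots> \<le> exp (-1)" using \<open>1 \<le> real k * (1 - \<gamma>)\<close> by simp
  also have "\<dots> \<le> 1 / 2"
    using exp_ge_add_one_self[of 1] by (simp add: exp_minus' divide_le_eq)
  finally show ?thesis unfolding k_def .
qed

lemma T_param_pos: "1 \<le> T_param \<gamma> nS nA"
  unfolding T_param_def by simp

lemma T_param_large:
  assumes "1 \<le> nS" "2 \<le> nA" "\<gamma> < 1"
  shows "4 \<le> 2 ^ T_param \<gamma> nS nA * (1 - \<gamma>)^2"
proof -
  define x where "x = real nS ^ 3 * real nA / (1 - \<gamma>)^2"
  have "2 \<le> real nS ^ 3 * real nA"
    using assms(1,2) mult_mono[of 1 "real nS ^ 3" 2 "real nA"] by simp
  hence x: "2 / (1 - \<gamma>)^2 \<le> x" unfolding x_def using assms(3) by (simp add: divide_right_mono)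
  have "0 < x" unfolding x_def using \<open>2 \<le> real nS ^ 3 * real nA\<close> assms(3)
    by (intro divide_pos_pos) auto
  hence "x = 2 powr log 2 x" by simp
  also have "\<dots> \<le> 2 powr real (nat \<lceil>log 2 x\<rceil>)" by (intro powr_mono real_nat_ceiling_ge) simp
  finally have "x \<le> 2 powr real (nat \<lceil>log 2 x\<rceil>)" .
  hence "2 / (1 - \<gamma>)^2 \<le> 2 ^ nat \<lceil>log 2 x\<rceil>" using x by (simp add: powr_realpow)
  hence "2 \<le> 2 ^ nat \<lceil>log 2 x\<rceil> * (1 - \<gamma>)^2" using assms(3) by (simp add: divide_le_eq)
  thus ?thesis by (simp add: T_param_def x_def mult.commute)
qed

lemma T_param_large_power:
  assumes "1 \<le> nS" "2 \<le> nA" "\<gamma> < 1" "2 * T_param \<gamma> nS nA \<le> n"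
  shows "16 \<le> 2 ^ n * (1 - \<gamma>)^4"
proof -
  define X where "X = 2 ^ T_param \<gamma> nS nA * (1 - \<gamma>)^2"
  have "4 * 4 \<le> X * X" using T_param_large[OF assms(1-3)] unfolding X_def by (intro mult_mono) auto
  also have "X * X = (2 ^ T_param \<gamma> nS nA * 2 ^ T_param \<gamma> nS nA) * ((1 - \<gamma>)^2 * (1 - \<gamma>)^2)"
    unfolding X_def by (simp only: mult_ac)
  also have "\<dots> = 2 ^ (2 * T_param \<gamma> nS nA) * (1 - \<gamma>)^4"
    by (simp add: mult_2 flip: power_add)
  also have "\<dots> \<le> 2 ^ n * (1 - \<gamma>)^4" using assms(4) by (intro mult_right_mono power_increasing) auto
  finally show ?thesis by simp
qed

lemma linear_recurrence_bound:
  fixes x :: "nat \<Rightarrow> real"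
  assumes "0 \<le> \<gamma>" "\<gamma> < 1" "0 \<le> b"
    and step: "\<And>i. i < n \<Longrightarrow> x (Suc (t0 + i)) \<le> \<gamma> * x (t0 + i) + b"
  shows "x (t0 + n) \<le> \<gamma> ^ n * x t0 + b / (1 - \<gamma>)"
  using step
proof (induction n)
  case 0
  thus ?case using assms(2,3) by simp
next
  case (Suc n)
  have "x (t0 + Suc n) \<le> \<gamma> * (\<gamma> ^ n * x t0 + b / (1 - \<gamma>)) + b"
    using Suc.prems[of n] Suc.IH Suc.prems mult_left_mono[OF _ assms(1)] by force
  also have "\<dots> = \<gamma> ^ Suc n * x t0 + b / (1 - \<gamma>)"
    using assms(2) by (simp add: field_simps)
  finally show ?case .
qed

section \<open>Policy mirror descent\<close>

locale pmd = mdp P c \<gamma> for P :: "'s::finite \<Rightarrow> 'a::finite \<Rightarrow> 's \<Rightarrow> real" and c \<gamma> +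
  fixes pis :: "nat \<Rightarrow> 's \<Rightarrow> 'a \<Rightarrow> real" and T NT :: nat
  assumes pmd_sequence: "is_pmd_sequence P c \<gamma> pis"
    and T_def: "T = T_param \<gamma> CARD('s) CARD('a)"
    and NT_def: "NT = N_param \<gamma> * T"
begin

abbreviation \<eta> where "\<eta> t \<equiv> step_size P c \<gamma> pis t"
abbreviation err where "err t \<equiv> subopt (pis t)"

lemma is_policy_pis: "is_policy (pis t)"
  using pmd_sequence unfolding is_pmd_sequence_def is_policy_def by (cases t) auto

lemma prob_simplex_pis: "prob_simplex (pis t s)"
  using is_policy_pis unfolding is_policy_def by simp

lemma pis_Suc_argmin:
  "prob_simplex p \<Longrightarrow>
    prox_obj (\<eta> t) (Q (pis t) s) (pis t s) (pis (Suc t) s) \<le> prox_obj (\<eta> t) (Q (pis t) s) (pis t s) p"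
  using pmd_sequence unfolding is_pmd_sequence_def pmd_obj_def prox_obj_def by blast

lemma step_size_eq: "\<eta> t = 2 ^ (t + 1) / Delta P c \<gamma> pis (NT * (t div NT))"
  unfolding step_size_def Let_def T_def NT_def ..

lemma step_size_nonneg: "0 \<le> \<eta> t"
  unfolding step_size_eq using Delta_nonneg[of pis, OF is_policy_pis] by simp

lemma T_pos: "1 \<le> T"
  unfolding T_def by (rule T_param_pos)

lemma T_large: "2 \<le> CARD('a) \<Longrightarrow> 4 \<le> 2 ^ T * (1 - \<gamma>)^2"
  unfolding T_def by (rule T_param_large) (simp_all add: Suc_le_eq discount_less_one)

lemma T_large_power: "2 \<le> CARD('a) \<Longrightarrow> 2 * T \<le> n \<Longrightarrow> 16 \<le> 2 ^ n * (1 - \<gamma>)^4"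
  unfolding T_def by (rule T_param_large_power) (simp_all add: Suc_le_eq discount_less_one)

lemma NT_ge: "4 * T \<le> NT"
  using four_le_N_param[OF discount_nonneg discount_less_one] unfolding NT_def by simp

lemma err_nonneg: "0 \<le> err t"
  by (rule subopt_nonneg[OF is_policy_pis])

lemma V_pis_Suc_le: "V (pis (Suc t)) s \<le> V (pis t) s"
proof (rule V_le_if_bellman_op_le[OF is_policy_pis])
  fix s
  have "(\<Sum>a\<in>UNIV. Q (pis t) s a * pis (Suc t) s a) \<le> (\<Sum>a\<in>UNIV. Q (pis t) s a * pis t s a)"
    by (rule prox_obj_descent[OF step_size_nonneg pis_Suc_argmin[OF prob_simplex_pis]])
  thus "bellman_op (pis (Suc t)) (V (pis t)) s \<le> V (pis t) s"
    unfolding sum_policy_Q[symmetric] using sum_policy_Q_self[OF is_policy_pis, of t s]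
    by (simp add: mult.commute)
qed

lemma err_Suc_le: "err (Suc t) \<le> err t"
proof -
  obtain s where "V (pis (Suc t)) s - Vopt s = err (Suc t)" using subopt_attained by blast
  thus ?thesis using V_sub_Vopt_le_subopt[of "pis t" s] V_pis_Suc_le[of t s] by linarith
qed

lemma err_antimono: "t \<le> t' \<Longrightarrow> err t' \<le> err t"
  by (rule lift_Suc_antimono_le[of "\<lambda>t. err t"]) (rule err_Suc_le)

text \<open>Comparing the prox step with the vertex at the optimal action: the Euclidean proximal
  step is greedy up to \<open>1 / \<eta> t\<close>, so the error contracts like value iteration up to that term.\<close>
lemma err_Suc_le_contraction:
  assumes \<eta>: "0 < \<eta> t"
  shows "err (Suc t) \<le> \<gamma> * err t + 1 / \<eta> t"
proof -
  have "V (pis (Suc t)) s - Vopt s \<le> \<gamma> * err t + 1 / \<eta> t" for s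
  proof -
    have "V (pis (Suc t)) s = bellman_op (pis (Suc t)) (V (pis (Suc t))) s"
      by (rule V_eq_bellman_op[OF is_policy_pis])
    also have "\<dots> \<le> bellman_op (pis (Suc t)) (V (pis t)) s"
      unfolding bellman_op_def
      by (intro add_left_mono mult_left_mono discount_nonneg sum_mono Ppi_nonneg[OF is_policy_pis]
          V_pis_Suc_le)
    also have "\<dots> = (\<Sum>a\<in>UNIV. Q (pis t) s a * pis (Suc t) s a)"
      by (simp add: sum_policy_Q[symmetric] mult.commute)
    also have "\<dots> \<le> Q (pis t) s (d_opt s) + 1 / \<eta> t"
      by (rule prox_obj_near_vertex[OF \<eta> prob_simplex_pis pis_Suc_argmin[OF prob_simplex_vertex]])
    also have "\<dots> \<le> Vopt s + \<gamma> * err t + 1 / \<eta> t"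
      using Q_le_Qopt_add_subopt Vopt_eq_Qopt by simp
    finally show ?thesis by simp
  qed
  moreover obtain s where "V (pis (Suc t)) s - Vopt s = err (Suc t)" using subopt_attained by blast
  ultimately show ?thesis by metis
qed

text \<open>Within the block of iterations starting at \<open>k * NT\<close>, the step sizes are normalised by
  \<open>Delta\<close> at the block start, which is at most \<open>err (k * NT) / (1 - \<gamma>)\<close>.\<close>
lemma inverse_step_size_le:
  assumes t: "k * NT \<le> t" and err: "0 < err t"
  shows "0 < \<eta> t" and "1 / \<eta> t \<le> err (k * NT) / ((1 - \<gamma>) * 2 ^ (t + 1))"
proof -
  define b where "b = NT * (t div NT)"
  have "0 < NT" using NT_ge T_pos by linarith
  hence b: "k * NT \<le> b" "b \<le> t"
    using t unfolding b_def by (auto simp: less_eq_div_iff_mult_less_eq mult.commute)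
  have "err t \<le> err b" "err b \<le> err (k * NT)" using err_antimono b by auto
  hence "Delta P c \<gamma> pis b \<noteq> 0" using subopt_eq_0_if_Delta_eq_0[of pis b, OF is_policy_pis] err by auto
  hence D: "0 < Delta P c \<gamma> pis b" using Delta_nonneg[of pis b, OF is_policy_pis] by simp
  have \<eta>: "\<eta> t = 2 ^ (t + 1) / Delta P c \<gamma> pis b" unfolding step_size_eq b_def ..
  show "0 < \<eta> t" unfolding \<eta> using D by simp
  have "1 / \<eta> t = Delta P c \<gamma> pis b / 2 ^ (t + 1)" unfolding \<eta> by simp
  also have "\<dots> \<le> (err b / (1 - \<gamma>)) / 2 ^ (t + 1)"
    by (rule divide_right_mono[OF Delta_le_subopt[of pis, OF is_policy_pis]]) simp
  also have "\<dots> \<le> (err (k * NT) / (1 - \<gamma>)) / 2 ^ (t + 1)"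
    using \<open>err b \<le> err (k * NT)\<close> discount_less_one by (intro divide_right_mono) auto
  finally show "1 / \<eta> t \<le> err (k * NT) / ((1 - \<gamma>) * 2 ^ (t + 1))" by simp
qed

lemma err_Suc_le_in_block:
  assumes "k * NT \<le> t"
  shows "err (Suc t) \<le> \<gamma> * err t + err (k * NT) / ((1 - \<gamma>) * 2 ^ (t + 1))"
proof (cases "err t = 0")
  case True
  have "0 \<le> err (k * NT) / ((1 - \<gamma>) * 2 ^ (t + 1))"
    using err_nonneg[of "k * NT"] discount_less_one by simp
  thus ?thesis using err_Suc_le[of t] True by simp
next
  case False
  hence "0 < err t" using err_nonneg[of t] by simp
  thus ?thesis using err_Suc_le_contraction inverse_step_size_le[OF assms] by force
qed

lemma err_tail_of_block:
  assumes A: "2 \<le> CARD('a)"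
  shows "err (k * NT + 2 * T - 1 + n) \<le> \<gamma> ^ n * err (k * NT) + (1 - \<gamma>)^2 * err (k * NT) / 16"
proof -
  define t0 where "t0 = k * NT + 2 * T - 1"
  define E where "E = err (k * NT)"
  have E: "0 \<le> E" unfolding E_def by (rule err_nonneg)
  have gp: "0 < 1 - \<gamma>" using discount_less_one by simp
  have step: "err (Suc (t0 + i)) \<le> \<gamma> * err (t0 + i) + (1 - \<gamma>)^3 * E / 16" for i
  proof -
    have "16 \<le> 2 ^ (t0 + i + 1) * (1 - \<gamma>)^4"
      using T_pos by (intro T_large_power[OF A]) (simp add: t0_def)
    hence "16 * E \<le> 2 ^ (t0 + i + 1) * (1 - \<gamma>)^4 * E" using E by (rule mult_right_mono)
    also have "\<dots> = (1 - \<gamma>)^3 * E * ((1 - \<gamma>) * 2 ^ (t0 + i + 1))"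
      unfolding power_Suc2[of _ 3, simplified] by (simp only: mult_ac)
    finally have "E \<le> (1 - \<gamma>)^3 * E / 16 * ((1 - \<gamma>) * 2 ^ (t0 + i + 1))"
      unfolding times_divide_eq_left by linarith
    hence "E / ((1 - \<gamma>) * 2 ^ (t0 + i + 1)) \<le> (1 - \<gamma>)^3 * E / 16"
      using gp by (simp add: pos_divide_le_eq mult_ac)
    moreover have "k * NT \<le> t0 + i" using T_pos unfolding t0_def by simp
    ultimately show ?thesis using err_Suc_le_in_block[of k "t0 + i"] unfolding E_def by linarith
  qed
  have "err (t0 + n) \<le> \<gamma> ^ n * err t0 + (1 - \<gamma>)^3 * E / 16 / (1 - \<gamma>)"
    using discount_nonneg discount_less_one E step by (intro linear_recurrence_bound) auto
  also have "\<gamma> ^ n * err t0 \<le> \<gamma> ^ n * E"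
    unfolding E_def t0_def using discount_nonneg T_pos by (intro mult_left_mono err_antimono) auto
  also have "(1 - \<gamma>)^3 * E / 16 / (1 - \<gamma>) = (1 - \<gamma>)^2 * E / 16"
    using gp by (simp add: field_simps power3_eq_cube power2_eq_square)
  finally show ?thesis unfolding t0_def E_def by simp
qed

lemma err_late_in_block:
  assumes A: "2 \<le> CARD('a)" and m: "k * NT + NT - 1 \<le> m"
  shows "err m \<le> (1 - \<gamma>) * err (k * NT) / 2"
proof -
  define E where "E = err (k * NT)"
  have E: "0 \<le> E" unfolding E_def by (rule err_nonneg)
  define n where "n = m - (k * NT + 2 * T - 1)"
  have m_eq: "m = k * NT + 2 * T - 1 + n" unfolding n_def using m NT_ge T_pos by simp
  have "(N_param \<gamma> - 2) * T \<le> n" unfolding n_def using m NT_ge T_pos by (simp add: NT_def diff_mult_distrib)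
  hence "\<gamma> ^ n \<le> (\<gamma> ^ (N_param \<gamma> - 2)) ^ T"
    using discount_nonneg discount_less_one by (simp add: power_decreasing flip: power_mult)
  also have "\<dots> \<le> (1 / 2) ^ T"
    by (intro power_mono power_N_param_le discount_nonneg discount_less_one zero_le_power)
  also have "\<dots> \<le> (1 - \<gamma>)^2 / 4"
    using T_large[OF A] by (simp add: power_one_over field_simps)
  finally have "\<gamma> ^ n * E \<le> (1 - \<gamma>)^2 / 4 * E" using E by (rule mult_right_mono)
  hence "err m \<le> (1 - \<gamma>)^2 * E / 4 + (1 - \<gamma>)^2 * E / 16"
    using err_tail_of_block[OF A, of k n] unfolding m_eq E_def by simp
  also have "\<dots> \<le> (1 - \<gamma>) * E / 2"
  proof -
    have "(1 - \<gamma>)^2 * E \<le> (1 - \<gamma>) * E"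
      using discount_nonneg discount_less_one E
      by (intro mult_right_mono) (simp_all add: power2_eq_square mult_left_le_one_le)
    moreover have "0 \<le> (1 - \<gamma>) * E" using E discount_less_one by simp
    ultimately show ?thesis by linarith
  qed
  finally show ?thesis unfolding E_def .
qed

lemma Q_gap_late_in_block:
  assumes A: "2 \<le> CARD('a)" and a: "(1 - \<gamma>) * err (k * NT) \<le> Qopt s a - Vopt s"
    and m: "k * NT + NT - 1 \<le> m"
  shows "(1 - \<gamma>) * err (k * NT) / 2 \<le> Q (pis m) s a - Q (pis m) s (d_opt s)"
proof -
  have "Q (pis m) s (d_opt s) \<le> Vopt s + \<gamma> * err m"
    using Q_le_Qopt_add_subopt[of "pis m" s "d_opt s"] Vopt_eq_Qopt[of s] by simp
  moreover have "\<gamma> * err m \<le> err m"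
    using discount_nonneg discount_less_one err_nonneg[of m] by (intro mult_left_le_one_le) auto
  ultimately show ?thesis
    using Qopt_le_Q[OF is_policy_pis, of s a m] a err_late_in_block[OF A m] by linarith
qed

lemma step_size_late_in_block:
  assumes A: "2 \<le> CARD('a)" and m: "k * NT + NT - 1 \<le> m" and err: "0 < err m"
  shows "2 \<le> \<eta> m * ((1 - \<gamma>) * err (k * NT) / 2)"
proof -
  have km: "k * NT \<le> m" using m NT_ge T_pos by simp
  note \<eta> = inverse_step_size_le[OF km err]
  have "(1 - \<gamma>) * 2 ^ (m + 1) \<le> \<eta> m * err (k * NT)"
    using \<eta> discount_less_one by (simp add: field_simps)
  hence "(1 - \<gamma>)^2 * 2 ^ (m + 1) \<le> (1 - \<gamma>) * (\<eta> m * err (k * NT))"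
    using discount_less_one by (simp add: power2_eq_square mult.assoc)
  moreover have "4 \<le> 2 ^ m * (1 - \<gamma>)^2"
  proof -
    have "T \<le> m" using m NT_ge T_pos by simp
    hence "2 ^ T * (1 - \<gamma>)^2 \<le> 2 ^ m * (1 - \<gamma>)^2"
      by (intro mult_right_mono power_increasing) auto
    thus ?thesis using T_large[OF A] by simp
  qed
  ultimately show ?thesis by (simp add: algebra_simps)
qed

lemma suboptimal_action_dropped:
  assumes err: "0 < err (k * NT)" and a: "(1 - \<gamma>) * err (k * NT) \<le> Qopt s a - Vopt s"
    and m: "k * NT + NT - 1 \<le> m"
  shows "pis (Suc m) s a = 0"
proof -
  have "0 < (1 - \<gamma>) * err (k * NT)" using err discount_less_one by simp
  hence sub: "Vopt s < Qopt s a" using a by linarith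
  show ?thesis
  proof (cases "err m = 0")
    case True
    hence "err (Suc m) = 0" using err_Suc_le[of m] err_nonneg[of "Suc m"] by simp
    hence "V (pis (Suc m)) s' = Vopt s'" for s'
      by (rule V_eq_Vopt_if_subopt_eq_0[OF is_policy_pis])
    thus ?thesis by (rule optimal_policy_vanishes_on_suboptimal[OF is_policy_pis _ sub])
  next
    case False
    hence "0 < err m" using err_nonneg[of m] by simp
    have A: "2 \<le> CARD('a)" by (rule two_le_card_if_suboptimal[OF sub])
    have big: "2 \<le> \<eta> m * (Q (pis m) s a - Q (pis m) s (d_opt s))"
      using step_size_late_in_block[OF A m \<open>0 < err m\<close>] Q_gap_late_in_block[OF A a m]
        mult_left_mono step_size_nonneg order_trans by blast
    show ?thesis
      by (rule prox_argmin_vanishes[OF prob_simplex_pis prob_simplex_pis pis_Suc_argmin big])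
  qed
qed

definition eliminated :: "nat \<Rightarrow> ('s \<times> 'a) set" where
  "eliminated t = {(s, a) \<in> suboptimal_pairs. \<forall>m\<ge>t. pis m s a = 0}"

lemma eliminated_mono: "t \<le> t' \<Longrightarrow> eliminated t \<subseteq> eliminated t'"
  unfolding eliminated_def by auto

text \<open>Some action with positive probability at the start of a block has optimal
  advantage at least \<open>(1 - \<gamma>) err (k * NT)\<close>; by the end of the block it is dropped for good.\<close>
lemma block_eliminates_new_pair:
  assumes "0 < err (k * NT)"
  shows "\<exists>x. x \<in> eliminated (Suc k * NT) - eliminated (k * NT)"
proof -
  obtain s a where pos: "0 < pis (k * NT) s a" and a: "(1 - \<gamma>) * err (k * NT) \<le> Qopt s a - Vopt s"
    using subopt_le_optimal_advantage[OF is_policy_pis] by blast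
  have "0 < (1 - \<gamma>) * err (k * NT)" using assms discount_less_one by simp
  hence "Vopt s < Qopt s a" using a by linarith
  moreover have "pis m s a = 0" if "Suc k * NT \<le> m" for m
  proof -
    have "NT \<le> m" using that by simp
    hence "0 < m" using NT_ge T_pos by linarith
    then obtain m' where "m = Suc m'" using gr0_implies_Suc by blast
    thus ?thesis using suboptimal_action_dropped[OF assms a, of m'] that by simp
  qed
  ultimately have "(s, a) \<in> eliminated (Suc k * NT)"
    unfolding eliminated_def suboptimal_pairs_def by simp
  moreover have "(s, a) \<notin> eliminated (k * NT)" unfolding eliminated_def using pos by auto
  ultimately show ?thesis by blast
qed

lemma err_eq_0_or_card_eliminated_ge: "err (k * NT) = 0 \<or> k \<le> card (eliminated (k * NT))"
proof (induction k)
  case (Suc k)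
  show ?case
  proof (cases "err (k * NT) = 0")
    case True
    hence "err (Suc k * NT) = 0"
      using err_antimono[of "k * NT" "Suc k * NT"] err_nonneg[of "Suc k * NT"] by simp
    thus ?thesis by simp
  next
    case False
    hence "0 < err (k * NT)" using err_nonneg[of "k * NT"] by simp
    hence "eliminated (k * NT) \<subset> eliminated (Suc k * NT)"
      using block_eliminates_new_pair eliminated_mono[of "k * NT" "Suc k * NT"] by auto
    hence "card (eliminated (k * NT)) < card (eliminated (Suc k * NT))"
      by (rule psubset_card_mono[rotated]) simp
    thus ?thesis using Suc.IH False by simp
  qed
qed simp

lemma V_pis_eq_Vopt:
  assumes \<tau>: "CARD('s) * (CARD('a) - 1) * NT \<le> \<tau>"
  shows "V (pis \<tau>) s = Vopt s"
proof -
  define K where "K = CARD('s) * (CARD('a) - 1)"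
  from err_eq_0_or_card_eliminated_ge[of K] show ?thesis
  proof
    assume "err (K * NT) = 0"
    hence "err \<tau> = 0" using err_antimono[of "K * NT" \<tau>] err_nonneg[of \<tau>] \<tau> by (simp add: K_def)
    thus ?thesis by (rule V_eq_Vopt_if_subopt_eq_0[OF is_policy_pis])
  next
    assume "K \<le> card (eliminated (K * NT))"
    moreover have "eliminated (K * NT) \<subseteq> suboptimal_pairs" unfolding eliminated_def by auto
    ultimately have "eliminated (K * NT) = suboptimal_pairs"
      using card_suboptimal_pairs unfolding K_def by (intro card_seteq) auto
    hence "pis \<tau> s a = 0" if "Vopt s < Qopt s a" for s a
      using that \<tau> unfolding eliminated_def suboptimal_pairs_def K_def by blast
    thus ?thesis
      using Vopt_le_Qopt
      by (intro V_eq_Vopt_if_supported_on_optimal[OF is_policy_pis]) (metis order_le_less)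
  qed
qed

end

theorem theorem3p10:
  fixes P :: "'s::finite \<Rightarrow> 'a::finite \<Rightarrow> 's \<Rightarrow> real"
    and c :: "'s \<Rightarrow> 'a \<Rightarrow> real"
    and \<gamma> :: real
    and pis :: "nat \<Rightarrow> 's \<Rightarrow> 'a \<Rightarrow> real"
    and \<tau> :: nat
    and pihat :: "'s \<Rightarrow> 'a \<Rightarrow> real"
  assumes "stochastic_kernel P"
    and "0 \<le> \<gamma>" and "\<gamma> < 1"
    and "is_pmd_sequence P c \<gamma> pis"
    and "\<tau> \<ge> CARD('s) * (CARD('a) - 1) * N_param \<gamma> * T_param \<gamma> CARD('s) CARD('a)"
    and "is_greedy P c \<gamma> (pis \<tau>) pihat"
  shows "optimal_policy P c \<gamma> pihat"
proof -
  interpret pmd P c \<gamma> pis "T_param \<gamma> CARD('s) CARD('a)" "N_param \<gamma> * T_param \<gamma> CARD('s) CARD('a)"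
    using assms(1-4) by unfold_locales auto
  have "V (pis \<tau>) s = Vopt s" for s
    using assms(5) by (intro V_pis_eq_Vopt) (simp add: mult.assoc)
  thus ?thesis by (rule greedy_of_optimal_is_optimal[OF is_policy_pis _ assms(6)])
qed

end
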